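(* Let $x$ be a speedable number which is nearly computable. Then $x$ is regainingly approximable.
   Context: A left-computable real $x$ (i.e. limit of a computable non-decreasing sequence of rationals) is speedable if there exist $\rho\in(0,1)$ and a computable strictly increasing sequence of rationals $(x_n)_n$ converging to $x$ such that $\frac{x-x_{n+1}}{x-x_n}\le\rho$ for infinitely many $n\in\mathbb{N}$. A real $x$ is regainingly approximable if there is a computable non-decreasing sequence of rationals $(x_n)_n$ converging to $x$ with $x - x_n < 2^{-n}$ for infinitely many $n\in\mathbb{N}$. A function $f:\mathbb{N}\to\mathbb{N}$ is a modulus of convergence of a convergent sequence $(y_n)_n$ with limit $y$ if for all $n$ and all $m\ge f(n)$ we have $|y-y_m|<2^{-n}$; $(y_n)_n$ converges computably if it has a computable modulus of convergence. A sequence $(x_n)_n$ converges nearly computably if it converges and for every computable increasing function $s:\mathbb{N}\to\mathbb{N}$ the sequence $(x_{s(n+1)}-x_{s(n)})_n$ converges computably to $0$. A real is nearly computable if some computable sequence of rationals converges nearly computably to it. *)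

theory Defs
  imports Complex_Main
begin

datatype recf =
    Zr
  | Sc
  | Pj nat
  | Cn recf "recf list"
  | Pr recf recf
  | Mn recf

inductive evalr :: "recf \<Rightarrow> nat list \<Rightarrow> nat \<Rightarrow> bool" where
  ev_Zr: "evalr Zr xs 0"
| ev_Sc: "evalr Sc (x # xs) (Suc x)"
| ev_Pj: "i < length xs \<Longrightarrow> evalr (Pj i) xs (xs ! i)"
| ev_Cn: "length ys = length gs \<Longrightarrow> (\<forall>i < length gs. evalr (gs ! i) xs (ys ! i))
          \<Longrightarrow> evalr f ys v \<Longrightarrow> evalr (Cn f gs) xs v"
| ev_Pr0: "evalr f xs v \<Longrightarrow> evalr (Pr f g) (0 # xs) v"
| ev_PrS: "evalr (Pr f g) (n # xs) w \<Longrightarrow> evalr g (n # w # xs) v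
          \<Longrightarrow> evalr (Pr f g) (Suc n # xs) v"
| ev_Mn: "evalr f (y # xs) 0 \<Longrightarrow> (\<forall>z < y. \<exists>u. u > 0 \<and> evalr f (z # xs) u)
          \<Longrightarrow> evalr (Mn f) xs y"

definition computable_nat :: "(nat \<Rightarrow> nat) \<Rightarrow> bool" where
  "computable_nat g \<longleftrightarrow> (\<exists>f. \<forall>n. evalr f [n] (g n))"

definition computable_rat_seq :: "(nat \<Rightarrow> rat) \<Rightarrow> bool" where
  "computable_rat_seq q \<longleftrightarrow> (\<exists>a b c. computable_nat a \<and> computable_nat b \<and> computable_nat c \<and>
     (\<forall>n. q n = (of_nat (a n) - of_nat (b n)) / (of_nat (c n) + 1)))"

definition left_computable :: "real \<Rightarrow> bool" where
  "left_computable x \<longleftrightarrow> (\<exists>q. computable_rat_seq q \<and> mono q \<and> (\<lambda>n. real_of_rat (q n)) \<longlonglongrightarrow> x)"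

definition speedable :: "real \<Rightarrow> bool" where
  "speedable x \<longleftrightarrow> left_computable x \<and>
     (\<exists>\<rho>::real. 0 < \<rho> \<and> \<rho> < 1 \<and>
        (\<exists>q. computable_rat_seq q \<and> strict_mono q \<and> (\<lambda>n. real_of_rat (q n)) \<longlonglongrightarrow> x \<and>
             (\<exists>\<^sub>\<infinity>n. (x - real_of_rat (q (Suc n))) / (x - real_of_rat (q n)) \<le> \<rho>)))"

definition regainingly_approximable :: "real \<Rightarrow> bool" where
  "regainingly_approximable x \<longleftrightarrow>
     (\<exists>q. computable_rat_seq q \<and> mono q \<and> (\<lambda>n. real_of_rat (q n)) \<longlonglongrightarrow> x \<and>
          (\<exists>\<^sub>\<infinity>n. x - real_of_rat (q n) < 2 powi (- int n)))"

definition is_modulus :: "(nat \<Rightarrow> real) \<Rightarrow> real \<Rightarrow> (nat \<Rightarrow> nat) \<Rightarrow> bool" where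
  "is_modulus y L f \<longleftrightarrow> (\<forall>n. \<forall>m \<ge> f n. \<bar>L - y m\<bar> < 2 powi (- int n))"

definition converges_computably :: "(nat \<Rightarrow> real) \<Rightarrow> real \<Rightarrow> bool" where
  "converges_computably y L \<longleftrightarrow> y \<longlonglongrightarrow> L \<and> (\<exists>f. computable_nat f \<and> is_modulus y L f)"

definition converges_nearly_computably :: "(nat \<Rightarrow> real) \<Rightarrow> bool" where
  "converges_nearly_computably x \<longleftrightarrow> convergent x \<and>
     (\<forall>s. computable_nat s \<and> strict_mono s \<longrightarrow>
          converges_computably (\<lambda>n. x (s (Suc n)) - x (s n)) 0)"

definition nearly_computable :: "real \<Rightarrow> bool" where
  "nearly_computable x \<longleftrightarrow> (\<exists>q. computable_rat_seq q \<and> (\<lambda>n. real_of_rat (q n)) \<longlonglongrightarrow> x \<and>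
     converges_nearly_computably (\<lambda>n. real_of_rat (q n)))"

end

theory Submission
  imports Defs "HOL-Library.Infinite_Set"
begin

text \<open>
  Let \<open>q\<close> witness speedability with ratio \<open>\<rho>\<close> and let \<open>y\<close> converge nearly computably to \<open>x\<close>.
  Since \<open>y - q \<rightarrow> 0\<close>, a computable search finds a computable subsequence \<open>s\<close> with
  \<open>|y (s n) - q (s n)| < 2^-n\<close>; near computability of \<open>y\<close> along \<open>s\<close> then yields a computable
  modulus \<open>F\<close> for the gaps \<open>q (s (n+1)) - q (s n)\<close>. Whenever the speedable step
  \<open>x - q (j+1) \<le> \<rho> (x - q j)\<close> happens inside a block \<open>s n \<le> j < s (n+1)\<close> whose gap is below
  \<open>(1 - \<rho>) 2^-k\<close>, the right end of the block is already \<open>2^-k\<close>-close to \<open>x\<close>.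
  Sampling \<open>q\<close> at \<open>s (G (k+1))\<close> for a computable strictly increasing \<open>G\<close> dominating
  \<open>F (k + c)\<close>, with \<open>2^-c \<le> 1 - \<rho>\<close>, therefore regains precision \<open>2^-k\<close> infinitely often.
\<close>

section \<open>Computable functions of several arguments\<close>

definition computable_fun :: "nat \<Rightarrow> (nat list \<Rightarrow> nat) \<Rightarrow> bool" where
  "computable_fun k f \<longleftrightarrow> (\<exists>r. \<forall>xs. length xs = k \<longrightarrow> evalr r xs (f xs))"

lemma computable_fun_cong:
  "computable_fun k f \<Longrightarrow> (\<And>xs. length xs = k \<Longrightarrow> f xs = g xs) \<Longrightarrow> computable_fun k g"
  unfolding computable_fun_def by metis

lemma computable_nat_iff_computable_fun: "computable_nat g \<longleftrightarrow> computable_fun 1 (\<lambda>xs. g (xs!0))"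
proof -
  have "length xs = 1 \<longleftrightarrow> xs = [xs!0]" for xs :: "nat list"
    by (cases xs) auto
  then show ?thesis
    unfolding computable_nat_def computable_fun_def by (metis nth_Cons_0)
qed

lemma computable_fun_zero: "computable_fun k (\<lambda>_. 0)"
  unfolding computable_fun_def by (auto intro: evalr.intros)

lemma computable_fun_proj: "i < k \<Longrightarrow> computable_fun k (\<lambda>xs. xs ! i)"
  unfolding computable_fun_def by (auto intro: evalr.intros)

lemma computable_fun_Suc: "computable_fun k f \<Longrightarrow> computable_fun k (\<lambda>xs. Suc (f xs))"
  unfolding computable_fun_def
proof (elim exE, intro exI allI impI)
  fix r and xs :: "nat list"
  assume "\<forall>xs. length xs = k \<longrightarrow> evalr r xs (f xs)" "length xs = k"
  then show "evalr (Cn Sc [r]) xs (Suc (f xs))"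
    by (intro ev_Cn[where ys="[f xs]"]) (auto intro: evalr.intros)
qed

lemma computable_fun_const: "computable_fun k (\<lambda>_. c)"
  by (induction c) (auto intro: computable_fun_zero computable_fun_Suc)

lemma list_choice:
  "\<forall>f\<in>set fs. \<exists>r. P f r \<Longrightarrow> \<exists>rs. length rs = length fs \<and> (\<forall>i<length fs. P (fs!i) (rs!i))"
proof (induction fs)
  case (Cons f fs)
  then obtain r rs where "P f r" "length rs = length fs" "\<forall>i<length fs. P (fs!i) (rs!i)" by auto
  then show ?case by (intro exI[of _ "r # rs"]) (auto simp: nth_Cons split: nat.splits)
qed simp

lemma computable_fun_compose:
  assumes "computable_fun (length fs) g" and "\<forall>f\<in>set fs. computable_fun k f"
  shows "computable_fun k (\<lambda>xs. g (map (\<lambda>f. f xs) fs))"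
proof -
  obtain rg where rg: "\<forall>ys. length ys = length fs \<longrightarrow> evalr rg ys (g ys)"
    using assms(1) unfolding computable_fun_def by blast
  have "\<forall>f\<in>set fs. \<exists>r. \<forall>xs. length xs = k \<longrightarrow> evalr r xs (f xs)"
    using assms(2) unfolding computable_fun_def by blast
  from list_choice[OF this] obtain rs where rs: "length rs = length fs"
    "\<forall>i<length fs. \<forall>xs. length xs = k \<longrightarrow> evalr (rs!i) xs ((fs!i) xs)" by blast
  show ?thesis unfolding computable_fun_def
  proof (intro exI allI impI)
    fix xs :: "nat list" assume "length xs = k"
    then show "evalr (Cn rg rs) xs (g (map (\<lambda>f. f xs) fs))"
      using rs rg by (intro ev_Cn[where ys="map (\<lambda>f. f xs) fs"]) auto
  qed
qed

lemma computable_fun_compose1: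
  "computable_fun 1 g \<Longrightarrow> computable_fun k f \<Longrightarrow> computable_fun k (\<lambda>xs. g [f xs])"
  using computable_fun_compose[of "[f]" g k] by simp

lemma computable_fun_compose2:
  "computable_fun 2 g \<Longrightarrow> computable_fun k f1 \<Longrightarrow> computable_fun k f2
   \<Longrightarrow> computable_fun k (\<lambda>xs. g [f1 xs, f2 xs])"
  using computable_fun_compose[of "[f1, f2]" g k] by (simp add: numeral_2_eq_2)

lemma computable_fun_computable_nat:
  "computable_nat a \<Longrightarrow> computable_fun k f \<Longrightarrow> computable_fun k (\<lambda>xs. a (f xs))"
  using computable_fun_compose1[of "\<lambda>xs. a (xs!0)"] by (simp add: computable_nat_iff_computable_fun)

text \<open>The argument order of \<open>g\<close> follows the semantics of \<open>Pr\<close> (rule \<open>ev_PrS\<close>).\<close>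

primrec prec :: "(nat list \<Rightarrow> nat) \<Rightarrow> (nat list \<Rightarrow> nat) \<Rightarrow> nat \<Rightarrow> nat list \<Rightarrow> nat" where
  "prec f g 0 ys = f ys"
| "prec f g (Suc n) ys = g (n # prec f g n ys # ys)"

lemma computable_fun_prec:
  assumes "computable_fun k f" and "computable_fun (Suc (Suc k)) g"
  shows "computable_fun (Suc k) (\<lambda>xs. prec f g (hd xs) (tl xs))"
proof -
  obtain rf rg where rf: "\<forall>xs. length xs = k \<longrightarrow> evalr rf xs (f xs)"
    and rg: "\<forall>xs. length xs = Suc (Suc k) \<longrightarrow> evalr rg xs (g xs)"
    using assms unfolding computable_fun_def by blast
  have eval: "evalr (Pr rf rg) (n # ys) (prec f g n ys)" if "length ys = k" for n ys
    using that by (induction n) (use rf rg in \<open>auto intro: ev_Pr0 ev_PrS\<close>)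
  show ?thesis unfolding computable_fun_def
  proof (intro exI allI impI)
    fix xs :: "nat list" assume "length xs = Suc k"
    then show "evalr (Pr rf rg) xs (prec f g (hd xs) (tl xs))"
      using eval by (cases xs) auto
  qed
qed

lemma computable_fun_Least:
  assumes "computable_fun (Suc k) h" and "\<And>xs. length xs = k \<Longrightarrow> \<exists>y. h (y # xs) = 0"
  shows "computable_fun k (\<lambda>xs. LEAST y. h (y # xs) = 0)"
proof -
  obtain rh where rh: "\<forall>xs. length xs = Suc k \<longrightarrow> evalr rh xs (h xs)"
    using assms(1) unfolding computable_fun_def by blast
  show ?thesis unfolding computable_fun_def
  proof (intro exI allI impI)
    fix xs :: "nat list" assume len: "length xs = k"
    let ?y = "LEAST y. h (y # xs) = 0"
    have "h (?y # xs) = 0" using assms(2)[OF len] by (rule LeastI_ex)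
    then have "evalr rh (?y # xs) 0" using rh len by (metis length_Cons)
    moreover have "\<forall>z<?y. \<exists>u. u > 0 \<and> evalr rh (z # xs) u"
    proof (intro allI impI)
      fix z assume "z < ?y"
      then have "h (z # xs) \<noteq> 0" by (rule not_less_Least)
      then show "\<exists>u. u > 0 \<and> evalr rh (z # xs) u" using rh len by auto
    qed
    ultimately show "evalr (Mn rh) xs ?y" by (rule ev_Mn)
  qed
qed

lemma computable_fun_add:
  assumes "computable_fun k f" and "computable_fun k g"
  shows "computable_fun k (\<lambda>xs. f xs + g xs)"
proof -
  have "computable_fun 2 (\<lambda>xs. prec (\<lambda>ys. ys!0) (\<lambda>zs. Suc (zs!1)) (hd xs) (tl xs))"
    using computable_fun_prec[of 1 "\<lambda>ys. ys!0" "\<lambda>zs. Suc (zs!1)"]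
    by (simp add: computable_fun_proj computable_fun_Suc numeral_2_eq_2)
  moreover have "prec (\<lambda>ys. ys!0) (\<lambda>zs. Suc (zs!1)) n ys = n + ys!0" for n ys
    by (induction n) auto
  ultimately have add2: "computable_fun 2 (\<lambda>xs. xs!0 + xs!1)"
    by (elim computable_fun_cong) (auto simp: length_Suc_conv numeral_2_eq_2)
  show ?thesis
    using computable_fun_compose2[OF add2 assms] by simp
qed

lemma computable_fun_mult:
  assumes "computable_fun k f" and "computable_fun k g"
  shows "computable_fun k (\<lambda>xs. f xs * g xs)"
proof -
  have "computable_fun 2 (\<lambda>xs. prec (\<lambda>ys. 0) (\<lambda>zs. zs!1 + zs!2) (hd xs) (tl xs))"
    using computable_fun_prec[of 1 "\<lambda>ys. 0" "\<lambda>zs. zs!1 + zs!2"]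
    by (simp add: computable_fun_proj computable_fun_zero computable_fun_add numeral_2_eq_2)
  moreover have "prec (\<lambda>ys. 0) (\<lambda>zs. zs!1 + zs!2) n ys = n * ys!0" for n ys
    by (induction n) auto
  ultimately have mult2: "computable_fun 2 (\<lambda>xs. xs!0 * xs!1)"
    by (elim computable_fun_cong) (auto simp: length_Suc_conv numeral_2_eq_2)
  show ?thesis
    using computable_fun_compose2[OF mult2 assms] by simp
qed

lemma computable_fun_diff:
  assumes "computable_fun k f" and "computable_fun k g"
  shows "computable_fun k (\<lambda>xs. f xs - g xs)"
proof -
  have "computable_fun 1 (\<lambda>xs. prec (\<lambda>ys. 0) (\<lambda>zs. zs!0) (hd xs) (tl xs))"
    using computable_fun_prec[of 0 "\<lambda>ys. 0" "\<lambda>zs. zs!0"]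
    by (simp add: computable_fun_proj computable_fun_zero)
  moreover have "prec (\<lambda>ys. 0) (\<lambda>zs. zs!0) n ys = n - 1" for n ys
    by (induction n) auto
  ultimately have pred: "computable_fun 1 (\<lambda>xs. xs!0 - 1)"
    by (elim computable_fun_cong) (auto simp: length_Suc_conv)
  have "computable_fun 3 (\<lambda>zs. zs!1 - 1)"
    using computable_fun_compose1[OF pred, of 3 "\<lambda>zs. zs!1"] by (simp add: computable_fun_proj)
  then have "computable_fun 2 (\<lambda>xs. prec (\<lambda>ys. ys!0) (\<lambda>zs. zs!1 - 1) (hd xs) (tl xs))"
    using computable_fun_prec[of 1 "\<lambda>ys. ys!0" "\<lambda>zs. zs!1 - 1"]
    by (simp add: computable_fun_proj numeral_2_eq_2 numeral_3_eq_3)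
  moreover have "prec (\<lambda>ys. ys!0) (\<lambda>zs. zs!1 - 1) n ys = ys!0 - n" for n ys
    by (induction n) auto
  ultimately have diff2: "computable_fun 2 (\<lambda>xs. xs!1 - xs!0)"
    by (elim computable_fun_cong) (auto simp: length_Suc_conv numeral_2_eq_2)
  show ?thesis
    using computable_fun_compose2[OF diff2 assms(2,1)] by simp
qed

lemma computable_fun_pow2:
  assumes "computable_fun k f"
  shows "computable_fun k (\<lambda>xs. 2 ^ f xs)"
proof -
  have "computable_fun 1 (\<lambda>xs. prec (\<lambda>ys. 1) (\<lambda>zs. zs!1 + zs!1) (hd xs) (tl xs))"
    using computable_fun_prec[of 0 "\<lambda>ys. 1" "\<lambda>zs. zs!1 + zs!1"]
    by (simp add: computable_fun_proj computable_fun_const computable_fun_add)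
  moreover have "prec (\<lambda>ys. 1) (\<lambda>zs. zs!1 + zs!1) n ys = 2 ^ n" for n ys
    by (induction n) auto
  ultimately have pow2: "computable_fun 1 (\<lambda>xs. 2 ^ (xs!0))"
    by (elim computable_fun_cong) (auto simp: length_Suc_conv)
  show ?thesis
    using computable_fun_compose1[OF pow2 assms] by simp
qed

lemma computable_nat_id: "computable_nat (\<lambda>n. n)"
  by (simp add: computable_nat_iff_computable_fun computable_fun_proj)

lemma computable_nat_Suc: "computable_nat Suc"
  by (simp add: computable_nat_iff_computable_fun computable_fun_Suc computable_fun_proj)

lemma computable_nat_const: "computable_nat (\<lambda>_. c)"
  by (simp add: computable_nat_iff_computable_fun computable_fun_const)

lemma computable_nat_add: "computable_nat f \<Longrightarrow> computable_nat g \<Longrightarrow> computable_nat (\<lambda>n. f n + g n)"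
  by (simp add: computable_nat_iff_computable_fun computable_fun_add)

lemma computable_nat_mult: "computable_nat f \<Longrightarrow> computable_nat g \<Longrightarrow> computable_nat (\<lambda>n. f n * g n)"
  by (simp add: computable_nat_iff_computable_fun computable_fun_mult)

lemmas computable_nat_arith =
  computable_nat_id computable_nat_Suc computable_nat_const computable_nat_add computable_nat_mult

lemma computable_nat_comp:
  assumes "computable_nat a" and "computable_nat h"
  shows "computable_nat (\<lambda>n. a (h n))"
  using computable_fun_computable_nat[OF assms(1) assms(2)[unfolded computable_nat_iff_computable_fun]]
  by (simp add: computable_nat_iff_computable_fun)

lemma computable_nat_rec_nat:
  assumes "computable_fun 2 (\<lambda>xs. g (xs!0) (xs!1))"
  shows "computable_nat (rec_nat c g)"
proof -
  have "computable_fun 1 (\<lambda>xs. prec (\<lambda>_. c) (\<lambda>zs. g (zs!0) (zs!1)) (hd xs) (tl xs))"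
    using computable_fun_prec[of 0 "\<lambda>_. c" "\<lambda>zs. g (zs!0) (zs!1)"] assms
    by (simp add: computable_fun_const numeral_2_eq_2)
  moreover have "prec (\<lambda>_. c) (\<lambda>zs. g (zs!0) (zs!1)) n [] = rec_nat c g n" for n
    by (induction n) auto
  ultimately show ?thesis
    unfolding computable_nat_iff_computable_fun
    by (elim computable_fun_cong) (auto simp: length_Suc_conv)
qed

lemma computable_rat_seq_comp:
  "computable_rat_seq q \<Longrightarrow> computable_nat h \<Longrightarrow> computable_rat_seq (q \<circ> h)"
  unfolding computable_rat_seq_def comp_def by (metis computable_nat_comp)

section \<open>Computable searches\<close>

lemma computable_strict_mono_search:
  fixes D :: "nat \<Rightarrow> nat \<Rightarrow> nat"
  assumes comp: "computable_fun 2 (\<lambda>xs. D (xs!0) (xs!1))" and ex: "\<And>n w. \<exists>m>w. D n m = 0"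
  shows "\<exists>s. computable_nat s \<and> strict_mono s \<and> (\<forall>n. D n (s n) = 0)"
proof -
  define next_zero where "next_zero n v = (LEAST m. v < m \<and> D (Suc n) m = 0)" for n v
  define s where "s = rec_nat (LEAST m. D 0 m = 0) next_zero"
  have "v < next_zero n v \<and> D (Suc n) (next_zero n v) = 0" for n v
    unfolding next_zero_def using ex[where n="Suc n" and w=v] by (rule LeastI_ex)
  then have step: "s n < s (Suc n)" "D (Suc n) (s (Suc n)) = 0" for n
    by (simp_all add: s_def)
  obtain m0 where "D 0 m0 = 0" using ex by blast
  then have "D 0 (s 0) = 0"
    unfolding s_def by (simp add: LeastI[of "\<lambda>m. D 0 m = 0"])
  then have zeros: "D n (s n) = 0" for n
    using step(2) by (cases n) auto
  \<comment> \<open>\<open>next_zero n v\<close> is the least \<open>m\<close> with \<open>(Suc v - m) + D (Suc n) m = 0\<close>\<close>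
  let ?h = "\<lambda>zs. (Suc (zs!2) - zs!0) + D (Suc (zs!1)) (zs!0)"
  have "computable_fun 3 (\<lambda>zs. D (Suc (zs!1)) (zs!0))"
    using computable_fun_compose2[OF comp, of 3 "\<lambda>zs. Suc (zs!1)" "\<lambda>zs. zs!0"]
    by (simp add: computable_fun_proj computable_fun_Suc)
  then have "computable_fun 3 ?h"
    by (intro computable_fun_add computable_fun_diff computable_fun_Suc computable_fun_proj) simp_all
  moreover have "\<exists>m. ?h (m # xs) = 0" for xs
    using ex[where n="Suc (xs!0)" and w="xs!1"] by (auto simp: Suc_le_eq)
  ultimately have "computable_fun 2 (\<lambda>xs. LEAST m. ?h (m # xs) = 0)"
    by (intro computable_fun_Least) (simp_all add: numeral_3_eq_3)
  then have "computable_fun 2 (\<lambda>xs. next_zero (xs!0) (xs!1))"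
    by (rule computable_fun_cong) (simp add: next_zero_def Suc_le_eq)
  then have "computable_nat s"
    unfolding s_def by (rule computable_nat_rec_nat)
  with step(1) zeros show ?thesis
    by (auto simp: strict_mono_Suc_iff)
qed

lemma computable_strict_mono_upper_bound:
  assumes "computable_nat f"
  shows "\<exists>g. computable_nat g \<and> strict_mono g \<and> (\<forall>n. f n \<le> g n)"
proof (intro exI conjI allI)
  let ?g = "rec_nat (f 0) (\<lambda>n v. v + f (Suc n) + 1)"
  have "computable_fun 2 (\<lambda>xs. f (Suc (xs!0)))"
    using assms by (rule computable_fun_computable_nat) (simp add: computable_fun_Suc computable_fun_proj)
  then have "computable_fun 2 (\<lambda>xs. xs!1 + f (Suc (xs!0)) + 1)"
    by (intro computable_fun_add computable_fun_proj computable_fun_const) simp_all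
  then show "computable_nat ?g"
    using computable_nat_rec_nat[of "\<lambda>n v. v + f (Suc n) + 1"] by simp
  show "strict_mono ?g" by (simp add: strict_mono_Suc_iff)
  show "f n \<le> ?g n" for n by (cases n) auto
qed

section \<open>Precision tests for computable sequences of rationals\<close>

lemma computable_rat_seq_diff:
  assumes "computable_rat_seq q" and "computable_rat_seq r"
  shows "computable_rat_seq (\<lambda>n. q n - r n)"
proof -
  obtain a b c a' b' c' where comp: "computable_nat a" "computable_nat b" "computable_nat c"
      "computable_nat a'" "computable_nat b'" "computable_nat c'"
    and q: "\<And>n. q n = (of_nat (a n) - of_nat (b n)) / (of_nat (c n) + 1)"
    and r: "\<And>n. r n = (of_nat (a' n) - of_nat (b' n)) / (of_nat (c' n) + 1)"
    using assms unfolding computable_rat_seq_def by metis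
  define A where "A n = a n * (c' n + 1) + b' n * (c n + 1)" for n
  define B where "B n = a' n * (c n + 1) + b n * (c' n + 1)" for n
  define C where "C n = c n * c' n + c n + c' n" for n
  have "q n - r n = (of_nat (A n) - of_nat (B n)) / (of_nat (C n) + 1)" for n
    unfolding q r A_def B_def C_def by (simp add: field_simps)
  moreover have "computable_nat A" "computable_nat B" "computable_nat C"
    unfolding A_def B_def C_def by (intro computable_nat_arith comp)+
  ultimately show ?thesis
    unfolding computable_rat_seq_def by blast
qed

lemma computable_rat_seq_precision_test:
  assumes "computable_rat_seq d"
  obtains D where "computable_fun 2 (\<lambda>xs. D (xs!0) (xs!1))"
    and "\<And>n m. D n m = 0 \<longleftrightarrow> \<bar>real_of_rat (d m)\<bar> < 1 / 2^n"
proof -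
  obtain A B C where comp: "computable_nat A" "computable_nat B" "computable_nat C"
    and d: "\<And>m. d m = (of_nat (A m) - of_nat (B m)) / (of_nat (C m) + 1)"
    using assms unfolding computable_rat_seq_def by blast
  \<comment> \<open>\<open>(A - B) + (B - A)\<close> is \<open>|A - B|\<close> in truncated subtraction\<close>
  define D where "D n m = Suc (2^n * ((A m - B m) + (B m - A m))) - Suc (C m)" for n m
  have "D n m = 0 \<longleftrightarrow> \<bar>real_of_rat (d m)\<bar> < 1 / 2^n" for n m
  proof -
    have "\<bar>real (A m) - real (B m)\<bar> = real ((A m - B m) + (B m - A m))"
      by (cases "A m \<le> B m") auto
    then have "\<bar>real_of_rat (d m)\<bar> = real ((A m - B m) + (B m - A m)) / (real (C m) + 1)"
      by (simp add: d of_rat_divide of_rat_diff of_rat_add)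
    also have "\<dots> < 1 / 2^n \<longleftrightarrow> real (2^n * ((A m - B m) + (B m - A m))) < real (Suc (C m))"
      by (simp add: field_simps)
    finally show ?thesis
      unfolding D_def of_nat_less_iff by linarith
  qed
  moreover have "computable_fun 2 (\<lambda>xs. D (xs!0) (xs!1))"
    unfolding D_def
    by (intro computable_fun_diff computable_fun_Suc computable_fun_mult computable_fun_pow2
        computable_fun_add computable_fun_proj computable_fun_computable_nat[OF comp(1)]
        computable_fun_computable_nat[OF comp(2)] computable_fun_computable_nat[OF comp(3)]) simp_all
  ultimately show ?thesis using that by blast
qed

lemma computable_strict_mono_close:
  assumes "computable_rat_seq q" and "computable_rat_seq r"
    and "(\<lambda>n. real_of_rat (q n) - real_of_rat (r n)) \<longlonglongrightarrow> 0"
  shows "\<exists>s. computable_nat s \<and> strict_mono s \<and>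
    (\<forall>n. \<bar>real_of_rat (q (s n)) - real_of_rat (r (s n))\<bar> < 1 / 2^n)"
proof -
  obtain D where "computable_fun 2 (\<lambda>xs. D (xs!0) (xs!1))"
    and "\<And>n m. D n m = 0 \<longleftrightarrow> \<bar>real_of_rat (q m - r m)\<bar> < 1 / 2^n"
    using computable_rat_seq_precision_test[OF computable_rat_seq_diff[OF assms(1,2)]] by blast
  then have D: "computable_fun 2 (\<lambda>xs. D (xs!0) (xs!1))"
    "\<And>n m. D n m = 0 \<longleftrightarrow> \<bar>real_of_rat (q m) - real_of_rat (r m)\<bar> < 1 / 2^n"
    by (simp_all add: of_rat_diff)
  have "\<exists>m>w. D n m = 0" for n w
  proof -
    have "\<forall>\<^sub>F m in sequentially. dist (real_of_rat (q m) - real_of_rat (r m)) 0 < 1 / 2^n"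
      using assms(3) by (rule tendstoD) simp
    then obtain N where "\<And>m. N \<le> m \<Longrightarrow> \<bar>real_of_rat (q m) - real_of_rat (r m)\<bar> < 1 / 2^n"
      by (auto simp: eventually_sequentially)
    then show ?thesis
      by (intro exI[of _ "max N (Suc w)"]) (simp add: D(2))
  qed
  then obtain s where "computable_nat s" "strict_mono s" "\<forall>n. D n (s n) = 0"
    using computable_strict_mono_search[OF D(1)] by blast
  then show ?thesis by (auto simp: D(2))
qed

section \<open>Regaining precision\<close>

lemma two_powi_minus: "(2::real) powi (- int n) = 1 / 2^n"
  by (simp add: power_int_minus divide_inverse)

lemma converges_nearly_computably_close_subseq:
  fixes Y P :: "nat \<Rightarrow> real"
  assumes "converges_nearly_computably Y" and "computable_nat s" and "strict_mono s"
    and close: "\<And>n. \<bar>Y (s n) - P (s n)\<bar> < 1 / 2^n"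
  shows "\<exists>F. computable_nat F \<and> (\<forall>k m. F k \<le> m \<longrightarrow> \<bar>P (s (Suc m)) - P (s m)\<bar> < 1 / 2^k)"
proof -
  obtain f where "computable_nat f" and f: "is_modulus (\<lambda>m. Y (s (Suc m)) - Y (s m)) 0 f"
    using assms(1-3) unfolding converges_nearly_computably_def converges_computably_def by blast
  define F where "F k = f (k + 2) + k + 2" for k
  have "computable_nat F"
    unfolding F_def
    by (intro computable_nat_add computable_nat_comp[OF \<open>computable_nat f\<close>] computable_nat_id
        computable_nat_const)
  moreover have "\<bar>P (s (Suc m)) - P (s m)\<bar> < 1 / 2^k" if "F k \<le> m" for k m
  proof -
    have small: "1 / 2^i \<le> 1 / (2::real)^(k + 2)" if "k + 2 \<le> i" for i
      using that by (intro divide_left_mono power_increasing) auto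
    have "f (k + 2) \<le> m" using \<open>F k \<le> m\<close> unfolding F_def by simp
    then have "\<bar>0 - (Y (s (Suc m)) - Y (s m))\<bar> < 2 powi (- int (k + 2))"
      using f unfolding is_modulus_def by blast
    then have "\<bar>Y (s (Suc m)) - Y (s m)\<bar> < 1 / 2^(k + 2)"
      unfolding two_powi_minus by (simp add: abs_minus_commute)
    moreover have "\<bar>Y (s m) - P (s m)\<bar> < 1 / 2^(k + 2)"
      using close[of m] small[of m] \<open>F k \<le> m\<close> unfolding F_def by linarith
    moreover have "\<bar>Y (s (Suc m)) - P (s (Suc m))\<bar> < 1 / 2^(k + 2)"
      using close[of "Suc m"] small[of "Suc m"] \<open>F k \<le> m\<close> unfolding F_def by linarith
    ultimately have "\<bar>P (s (Suc m)) - P (s m)\<bar> < 3 / 2^(k + 2)"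
      by (simp add: abs_less_iff)
    also have "\<dots> < 1 / 2^k"
      by (simp add: power_add divide_simps)
    finally show ?thesis .
  qed
  ultimately show ?thesis by blast
qed

lemma nearly_computable_gap_modulus:
  assumes "computable_rat_seq y" and "converges_nearly_computably (\<lambda>n. real_of_rat (y n))"
    and "computable_rat_seq q" and "(\<lambda>n. real_of_rat (y n) - real_of_rat (q n)) \<longlonglongrightarrow> 0"
  obtains s F where "computable_nat s" and "strict_mono s" and "computable_nat F"
    and "\<And>k m. F k \<le> m \<Longrightarrow> \<bar>real_of_rat (q (s (Suc m))) - real_of_rat (q (s m))\<bar> < 1 / 2^k"
proof -
  obtain s where s: "computable_nat s" "strict_mono s"
    and close: "\<And>n. \<bar>real_of_rat (y (s n)) - real_of_rat (q (s n))\<bar> < 1 / 2^n"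
    using computable_strict_mono_close[OF assms(1,3,4)] by blast
  with that show ?thesis
    using converges_nearly_computably_close_subseq[OF assms(2) s close] by blast
qed

lemma strict_mono_less_limit:
  fixes P :: "nat \<Rightarrow> real"
  assumes "strict_mono P" and "P \<longlonglongrightarrow> x"
  shows "P j < x"
proof -
  have "P (Suc j) \<le> x"
    using incseq_le[OF strict_mono_mono[OF assms(1)] assms(2)] .
  then show ?thesis
    using strict_monoD[OF assms(1), of j "Suc j"] by simp
qed

lemma speedup_gap:
  fixes P :: "nat \<Rightarrow> real"
  assumes "incseq P" and "P j < x" and speed: "(x - P (Suc j)) / (x - P j) \<le> \<rho>"
    and "0 \<le> \<rho>" and "\<rho> < 1" and "a \<le> j" and "j < b" and gap: "P b - P a < \<epsilon> * (1 - \<rho>)"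
  shows "x - P b < \<epsilon>"
proof -
  have "x - P b \<le> x - P (Suc j)"
    using \<open>incseq P\<close> \<open>j < b\<close> by (simp add: incseq_def)
  also have "\<dots> \<le> \<rho> * (x - P j)"
    using speed \<open>P j < x\<close> by (simp add: divide_le_eq)
  also have "\<dots> \<le> \<rho> * (x - P a)"
    using \<open>incseq P\<close> \<open>a \<le> j\<close> \<open>0 \<le> \<rho>\<close> by (simp add: incseq_def mult_left_mono)
  finally have "(1 - \<rho>) * (x - P b) \<le> \<rho> * (P b - P a)"
    by (simp add: algebra_simps)
  also have "\<dots> \<le> P b - P a"
    using \<open>incseq P\<close> \<open>a \<le> j\<close> \<open>j < b\<close> \<open>0 \<le> \<rho>\<close> \<open>\<rho> < 1\<close>
    by (intro mult_left_le_one_le) (auto simp: incseq_def)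
  also have "\<dots> < \<epsilon> * (1 - \<rho>)" by (fact gap)
  finally show ?thesis
    using \<open>\<rho> < 1\<close> by (simp add: mult.commute)
qed

lemma strict_mono_bracket:
  fixes h :: "nat \<Rightarrow> nat"
  assumes "strict_mono h" and "h 0 \<le> n"
  obtains k where "h k \<le> n" and "n < h (Suc k)"
proof -
  define L where "L = (LEAST K. n < h K)"
  have "n < h (Suc n)" using strict_mono_imp_increasing[OF assms(1), of "Suc n"] by simp
  then have L: "n < h L" unfolding L_def by (rule LeastI)
  then obtain k where k: "L = Suc k" using assms(2) by (cases L) auto
  have "\<not> n < h k"
  proof
    assume "n < h k"
    then have "L \<le> k" unfolding L_def by (rule Least_le)
    with k show False by simp
  qed
  with L k show ?thesis by (intro that[of k]) simp_all
qed

lemma speedable_regains_precision: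
  fixes P :: "nat \<Rightarrow> real" and s F G :: "nat \<Rightarrow> nat"
  assumes "incseq P" and below: "\<And>j. P j < x" and "0 \<le> \<rho>" and "\<rho> < 1"
    and speed: "\<exists>\<^sub>\<infinity>j. (x - P (Suc j)) / (x - P j) \<le> \<rho>"
    and s: "strict_mono s" and gaps: "\<And>k m. F k \<le> m \<Longrightarrow> \<bar>P (s (Suc m)) - P (s m)\<bar> < 1 / 2^k"
    and c: "1 / 2^c \<le> 1 - \<rho>" and G: "strict_mono G" and F_le_G: "\<And>k. F (k + c) \<le> G k"
  shows "\<exists>\<^sub>\<infinity>k. x - P (s (G (Suc k))) < 1 / 2^k"
  unfolding INFM_nat
proof
  fix M
  obtain j where j: "s (G (Suc M)) < j" and speed_j: "(x - P (Suc j)) / (x - P j) \<le> \<rho>"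
    using speed unfolding INFM_nat by blast
  have "s 0 \<le> j"
    using strict_mono_leD[OF s, of 0 "G (Suc M)"] j by simp
  then obtain n where n: "s n \<le> j" "j < s (Suc n)"
    using strict_mono_bracket[OF s] by blast
  have "G (Suc M) \<le> n"
  proof (rule ccontr)
    assume "\<not> G (Suc M) \<le> n"
    then have "s (Suc n) \<le> s (G (Suc M))" using strict_mono_leD[OF s] by simp
    with n(2) j show False by simp
  qed
  moreover have "G 0 \<le> G (Suc M)" using strict_mono_leD[OF G] by simp
  ultimately have "G 0 \<le> n" by linarith
  then obtain k where k: "G k \<le> n" "n < G (Suc k)"
    by (rule strict_mono_bracket[OF G])
  have "M < k"
    using \<open>G (Suc M) \<le> n\<close> k(2) strict_mono_less[OF G, of "Suc M" "Suc k"] by simp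
  have "F (k + c) \<le> n" using F_le_G[of k] k(1) by simp
  then have "P (s (Suc n)) - P (s n) < 1 / 2^(k + c)"
    using gaps abs_less_iff by blast
  also have "\<dots> = 1 / 2^k * (1 / 2^c)" by (simp add: power_add)
  also have "\<dots> \<le> 1 / 2^k * (1 - \<rho>)" using c by (intro mult_left_mono) auto
  finally have "x - P (s (Suc n)) < 1 / 2^k"
    by (rule speedup_gap[OF \<open>incseq P\<close> below speed_j \<open>0 \<le> \<rho>\<close> \<open>\<rho> < 1\<close> n])
  moreover have "P (s (Suc n)) \<le> P (s (G (Suc k)))"
    using \<open>incseq P\<close> k(2) strict_mono_leD[OF s, of "Suc n" "G (Suc k)"] by (simp add: incseq_def)
  ultimately show "\<exists>k>M. x - P (s (G (Suc k))) < 1 / 2^k"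
    using \<open>M < k\<close> by (intro exI[of _ k]) auto
qed

lemma regainingly_approximableI_subseq:
  assumes "computable_rat_seq q" and "mono q" and "(\<lambda>n. real_of_rat (q n)) \<longlonglongrightarrow> x"
    and "computable_nat t" and "strict_mono t"
    and "\<exists>\<^sub>\<infinity>k. x - real_of_rat (q (t k)) < 1 / 2^k"
  shows "regainingly_approximable x"
  unfolding regainingly_approximable_def
proof (intro exI[of _ "q \<circ> t"] conjI)
  show "computable_rat_seq (q \<circ> t)"
    using assms(1,4) by (rule computable_rat_seq_comp)
  show "mono (q \<circ> t)"
    using assms(2,5) by (simp add: mono_def strict_mono_less_eq)
  show "(\<lambda>n. real_of_rat ((q \<circ> t) n)) \<longlonglongrightarrow> x"
    using LIMSEQ_subseq_LIMSEQ[OF assms(3,5)] by (simp add: o_def)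
  show "\<exists>\<^sub>\<infinity>n. x - real_of_rat ((q \<circ> t) n) < 2 powi - int n"
    using assms(6) by (simp add: two_powi_minus)
qed

theorem theorem5p8:
  fixes x :: real
  assumes "speedable x" and "nearly_computable x"
  shows "regainingly_approximable x"
proof -
  obtain \<rho> q where \<rho>: "0 < \<rho>" "\<rho> < 1" and q: "computable_rat_seq q" "strict_mono q"
    and q_lim: "(\<lambda>n. real_of_rat (q n)) \<longlonglongrightarrow> x"
    and speed: "\<exists>\<^sub>\<infinity>n. (x - real_of_rat (q (Suc n))) / (x - real_of_rat (q n)) \<le> \<rho>"
    using assms(1) unfolding speedable_def by blast
  obtain y where y: "computable_rat_seq y" "(\<lambda>n. real_of_rat (y n)) \<longlonglongrightarrow> x"
    and y_near: "converges_nearly_computably (\<lambda>n. real_of_rat (y n))"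
    using assms(2) unfolding nearly_computable_def by blast
  obtain s F where s: "computable_nat s" "strict_mono s" and "computable_nat F"
    and gaps: "\<And>k m. F k \<le> m \<Longrightarrow> \<bar>real_of_rat (q (s (Suc m))) - real_of_rat (q (s m))\<bar> < 1 / 2^k"
    using nearly_computable_gap_modulus[OF y(1) y_near q(1)] tendsto_diff[OF y(2) q_lim] by auto
  obtain c where c: "1 / 2^c < 1 - \<rho>"
    using real_arch_pow_inv[of "1 - \<rho>" "1/2"] \<rho> by (auto simp: power_one_over)
  obtain G where G: "computable_nat G" "strict_mono G" and F_le_G: "\<And>k. F (k + c) \<le> G k"
    using computable_strict_mono_upper_bound[of "\<lambda>k. F (k + c)"]
      computable_nat_comp[OF \<open>computable_nat F\<close> computable_nat_add[OF computable_nat_id computable_nat_const]]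
    by blast
  have P: "strict_mono (\<lambda>n. real_of_rat (q n))" using q(2) by (simp add: strict_mono_def of_rat_less)
  have "\<exists>\<^sub>\<infinity>k. x - real_of_rat (q (s (G (Suc k)))) < 1 / 2^k"
    by (rule speedable_regains_precision[OF strict_mono_mono[OF P] strict_mono_less_limit[OF P q_lim]
        less_imp_le[OF \<rho>(1)] \<rho>(2) speed s(2) gaps less_imp_le[OF c] G(2) F_le_G])
  moreover have "computable_nat (\<lambda>k. s (G (Suc k)))"
    by (intro computable_nat_comp[OF s(1)] computable_nat_comp[OF G(1)] computable_nat_Suc)
  ultimately show ?thesis
    using regainingly_approximableI_subseq[OF q(1) strict_mono_mono[OF q(2)] q_lim]
      strict_monoD[OF s(2)] strict_monoD[OF G(2)] by (simp add: strict_mono_Suc_iff)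
qed

end
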